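(* Consider the networked SIR model with isolation on an undirected graph with nodes $\{1,\dots,n\}$ and adjacency matrix $A=(a_{ij})$, with infection rates $\beta_i>0$, natural recovery rates $\delta_i>0$, and isolation times following phase-type distributions $(u_1,\Pi_i)$, $\Pi_i\in\mathbb R^{p\times p}$. Let $\Pi_i'=\Pi_i-\delta_iI_p$, $w_i'=-\Pi_i'\mathbf 1_p$, and let $J,B$ be the $n\times n$ diagonal matrices with $J_{ii}=S_i(0)$, $B_{ii}=\beta_i$. Let $\bar\lambda>0$ be given. If there exists an entrywise positive vector $v\in\mathbb R^{np}$ such that $$v^\top\Big(\bigoplus_{i=1}^n(\Pi_i')^\top+(JBA)\otimes(u_1\mathbf 1_p^\top)\Big)+\mathbf 1_n^\top\bigoplus_{i=1}^n(w_i')^\top<0\qquad\text{and}\qquad v^\top\tilde I(0)<\bar\lambda+\sigma_I(0),$$ then $\lambda<\bar\lambda$.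
   Context: Phase-type distribution $(\phi,\Pi)$: the distribution of the absorption time of a continuous-time Markov process on states $1,\dots,p+1$ ($1,\dots,p$ transient, $p+1$ absorbing) with generator $\begin{bmatrix}\Pi&w\\0&0\end{bmatrix}$, $w=-\Pi\mathbf 1_p$, $\Pi$ an invertible Metzler matrix with nonpositive row sums, and initial distribution $(\phi,0)$. SIR model with isolation: each node $i$ is at each time in exactly one of the states susceptible, infected, removed, with $\{0,1\}$-indicators $S_i(t),I_i(t),R_i(t)$. A susceptible node $i$ becomes infected with instantaneous rate $\beta_i\sum_j a_{ij}I_j(t)$. Once node $i$ becomes infected, it is removed after a time $Z_i=\min(X_i,Y_i)$, where $X_i$ is exponential with rate $\delta_i$ (natural recovery), $Y_i$ (isolation/quarantine time) follows the phase-type distribution $(u_1,\Pi_i)$, and these are independent of each other and of the rest of the process; removed nodes stay removed. At time $0$ each node is either susceptible or infected (known). $\sigma_I(t),\sigma_R(t)$ are the numbers of infected and removed nodes at time $t$, and $\lambda=\lim_{t\to\infty}E[\sigma_R(t)]-\sigma_I(0)$. $\tilde I(0)\in\mathbb R^{np}$ is the stacked vector $[\tilde I_1(0)^\top,\dots,\tilde I_n(0)^\top]^\top$ with $\tilde I_i(0)=u_1$ if node $i$ is infected at time $0$ and $\tilde I_i(0)=0$ otherwise. $u_1$ is the first canonical basis vector of $\mathbb R^p$, $\mathbf 1_k$ the all-ones vector in $\mathbb R^k$, $\otimes$ the Kronecker product, and $\bigoplus_{i=1}^n M_i$ the block-diagonal matrix with diagonal blocks $M_1,\dots,M_n$. Vector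 inequalities are entrywise. *)

theory Defs
  imports Complex_Main
begin

text \<open>An m x k matrix is a function M :: nat => nat => real, read only on indices i < m, j < k.
  Vectors are functions nat => real. Indices start at 0.\<close>

definition mmul :: "nat \<Rightarrow> (nat \<Rightarrow> nat \<Rightarrow> real) \<Rightarrow> (nat \<Rightarrow> nat \<Rightarrow> real) \<Rightarrow> nat \<Rightarrow> nat \<Rightarrow> real" where
  "mmul m M N i j = (\<Sum>k<m. M i k * N k j)"

definition idm :: "nat \<Rightarrow> nat \<Rightarrow> real" where
  "idm i j = (if i = j then 1 else 0)"

definition diagm :: "(nat \<Rightarrow> real) \<Rightarrow> nat \<Rightarrow> nat \<Rightarrow> real" where
  "diagm d i j = (if i = j then d i else 0)"

definition transp :: "(nat \<Rightarrow> nat \<Rightarrow> real) \<Rightarrow> nat \<Rightarrow> nat \<Rightarrow> real" where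
  "transp M i j = M j i"

definition kron :: "nat \<Rightarrow> nat \<Rightarrow> (nat \<Rightarrow> nat \<Rightarrow> real) \<Rightarrow> (nat \<Rightarrow> nat \<Rightarrow> real) \<Rightarrow> nat \<Rightarrow> nat \<Rightarrow> real" where
  "kron q r M N i j = M (i div q) (j div r) * N (i mod q) (j mod r)"

definition bdiag :: "nat \<Rightarrow> nat \<Rightarrow> (nat \<Rightarrow> nat \<Rightarrow> nat \<Rightarrow> real) \<Rightarrow> nat \<Rightarrow> nat \<Rightarrow> real" where
  "bdiag r c F i j = (if i div r = j div c then F (i div r) (i mod r) (j mod c) else 0)"

definition madd :: "(nat \<Rightarrow> nat \<Rightarrow> real) \<Rightarrow> (nat \<Rightarrow> nat \<Rightarrow> real) \<Rightarrow> nat \<Rightarrow> nat \<Rightarrow> real" where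
  "madd M N i j = M i j + N i j"

definition vmul :: "nat \<Rightarrow> (nat \<Rightarrow> real) \<Rightarrow> (nat \<Rightarrow> nat \<Rightarrow> real) \<Rightarrow> nat \<Rightarrow> real" where
  "vmul m x M j = (\<Sum>i<m. x i * M i j)"

definition invertible_sq :: "nat \<Rightarrow> (nat \<Rightarrow> nat \<Rightarrow> real) \<Rightarrow> bool" where
  "invertible_sq m M \<longleftrightarrow> (\<exists>N. \<forall>i<m. \<forall>j<m. mmul m M N i j = idm i j \<and> mmul m N M i j = idm i j)"

definition metzler :: "nat \<Rightarrow> (nat \<Rightarrow> nat \<Rightarrow> real) \<Rightarrow> bool" where
  "metzler m M \<longleftrightarrow> (\<forall>i<m. \<forall>j<m. i \<noteq> j \<longrightarrow> M i j \<ge> 0)"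

text \<open>First canonical basis vector u_1 (index 0) and the all-ones vector.\<close>
definition u1 :: "nat \<Rightarrow> real" where "u1 k = (if k = 0 then 1 else 0)"
definition ones :: "nat \<Rightarrow> real" where "ones k = 1"

text \<open>Local state of a node: susceptible, infected with the isolation clock in phase k
  (phases 0..p-1; phase 0 corresponds to u_1), removed.  Since the time to removal is
  min(X_i, Y_i) with X_i ~ Exp(delta_i) independent of the phase-type Y_i ~ (u_1, Pi_i),
  an infected node in phase k jumps to phase l (l ~= k) with rate Pi_i k l and to removed
  with rate delta_i + w_i k, w_i = - Pi_i 1.\<close>
datatype lstate = Sus | Inf nat | Rem

definition is_inf :: "lstate \<Rightarrow> bool" where
  "is_inf s = (case s of Inf _ \<Rightarrow> True | _ \<Rightarrow> False)"

definition states :: "nat \<Rightarrow> nat \<Rightarrow> (nat \<Rightarrow> lstate) set" where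
  "states n p = {x. (\<forall>i<n. x i = Sus \<or> x i = Rem \<or> (\<exists>k<p. x i = Inf k)) \<and> (\<forall>i\<ge>n. x i = Sus)}"

definition lrate :: "nat \<Rightarrow> nat \<Rightarrow> (nat \<Rightarrow> nat \<Rightarrow> real) \<Rightarrow> (nat \<Rightarrow> real) \<Rightarrow> (nat \<Rightarrow> real)
    \<Rightarrow> (nat \<Rightarrow> nat \<Rightarrow> nat \<Rightarrow> real) \<Rightarrow> nat \<Rightarrow> (nat \<Rightarrow> lstate) \<Rightarrow> lstate \<Rightarrow> lstate \<Rightarrow> real" where
  "lrate n p A beta delta Pi i x s s' =
     (case s of
        Sus \<Rightarrow> (case s' of
                  Inf l \<Rightarrow> (if l = 0 then beta i * (\<Sum>j<n. A i j * (if is_inf (x j) then 1 else 0)) else 0)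
                | _ \<Rightarrow> 0)
      | Inf k \<Rightarrow> (case s' of
                  Inf l \<Rightarrow> (if l \<noteq> k \<and> l < p then Pi i k l else 0)
                | Rem \<Rightarrow> delta i - (\<Sum>l<p. Pi i k l)
                | Sus \<Rightarrow> 0)
      | Rem \<Rightarrow> 0)"

definition rate :: "nat \<Rightarrow> nat \<Rightarrow> (nat \<Rightarrow> nat \<Rightarrow> real) \<Rightarrow> (nat \<Rightarrow> real) \<Rightarrow> (nat \<Rightarrow> real)
    \<Rightarrow> (nat \<Rightarrow> nat \<Rightarrow> nat \<Rightarrow> real) \<Rightarrow> (nat \<Rightarrow> lstate) \<Rightarrow> (nat \<Rightarrow> lstate) \<Rightarrow> real" where
  "rate n p A beta delta Pi x y =
     (\<Sum>i<n. if x i \<noteq> y i \<and> y = x(i := y i) then lrate n p A beta delta Pi i x (x i) (y i) else 0)"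

definition gen :: "nat \<Rightarrow> nat \<Rightarrow> (nat \<Rightarrow> nat \<Rightarrow> real) \<Rightarrow> (nat \<Rightarrow> real) \<Rightarrow> (nat \<Rightarrow> real)
    \<Rightarrow> (nat \<Rightarrow> nat \<Rightarrow> nat \<Rightarrow> real) \<Rightarrow> (nat \<Rightarrow> lstate) \<Rightarrow> (nat \<Rightarrow> lstate) \<Rightarrow> real" where
  "gen n p A beta delta Pi x y =
     (if x = y then - (\<Sum>z\<in>states n p - {x}. rate n p A beta delta Pi x z)
      else rate n p A beta delta Pi x y)"

fun mpow :: "'s set \<Rightarrow> ('s \<Rightarrow> 's \<Rightarrow> real) \<Rightarrow> nat \<Rightarrow> 's \<Rightarrow> 's \<Rightarrow> real" where
  "mpow S Q 0 x y = (if x = y then 1 else 0)"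
| "mpow S Q (Suc k) x y = (\<Sum>z\<in>S. mpow S Q k x z * Q z y)"

definition trans_prob :: "'s set \<Rightarrow> ('s \<Rightarrow> 's \<Rightarrow> real) \<Rightarrow> real \<Rightarrow> 's \<Rightarrow> 's \<Rightarrow> real" where
  "trans_prob S Q t x y = (\<Sum>k. t ^ k / fact k * mpow S Q k x y)"

definition init_state :: "nat \<Rightarrow> (nat \<Rightarrow> bool) \<Rightarrow> nat \<Rightarrow> lstate" where
  "init_state n inf0 i = (if i < n \<and> inf0 i then Inf 0 else Sus)"

definition exp_removed :: "nat \<Rightarrow> nat \<Rightarrow> (nat \<Rightarrow> nat \<Rightarrow> real) \<Rightarrow> (nat \<Rightarrow> real) \<Rightarrow> (nat \<Rightarrow> real)
    \<Rightarrow> (nat \<Rightarrow> nat \<Rightarrow> nat \<Rightarrow> real) \<Rightarrow> (nat \<Rightarrow> bool) \<Rightarrow> real \<Rightarrow> real" where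
  "exp_removed n p A beta delta Pi inf0 t =
     (\<Sum>y\<in>states n p. trans_prob (states n p) (gen n p A beta delta Pi) t (init_state n inf0) y
                        * real (card {i. i < n \<and> y i = Rem}))"

definition sigmaI0 :: "nat \<Rightarrow> (nat \<Rightarrow> bool) \<Rightarrow> real" where
  "sigmaI0 n inf0 = real (card {i. i < n \<and> inf0 i})"

definition epidemic_lambda :: "nat \<Rightarrow> nat \<Rightarrow> (nat \<Rightarrow> nat \<Rightarrow> real) \<Rightarrow> (nat \<Rightarrow> real) \<Rightarrow> (nat \<Rightarrow> real)
    \<Rightarrow> (nat \<Rightarrow> nat \<Rightarrow> nat \<Rightarrow> real) \<Rightarrow> (nat \<Rightarrow> bool) \<Rightarrow> real" where
  "epidemic_lambda n p A beta delta Pi inf0 =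
     Lim at_top (exp_removed n p A beta delta Pi inf0) - sigmaI0 n inf0"

end

theory Submission
  imports Defs
begin

(* Let g be the potential giving weight 1 to a removed node and weight v_{ik} to an infected node i
   in isolation phase k. Entry (i,k) of the first hypothesis bounds the rate of change of g while
   node i is in phase k, so the generator Q of the chain satisfies Q g <= 0 on the states in which
   no initially infected node is susceptible, a set the chain never leaves. Removal is irreversible, so Q sigma_R >= 0, and sigma_R <= g.
   Uniformization, P(t) = exp(-ct) sum_j (ct)^j/j! K^j with the stochastic matrix K = I + Q/c,
   writes E[sigma_R(t)] as a Poisson average of the nondecreasing sequence (K^j sigma_R)(x_0), which
   is bounded by (K^j g)(x_0) <= g(x_0) = v^T I~(0). Hence lim E[sigma_R(t)] <= v^T I~(0), which is
   less than lbar + sigma_I(0). *)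

section \<open>Powers of finite matrices\<close>

lemma mpow_Suc_left:
  assumes "finite S" and "x \<in> S" and "y \<in> S"
  shows "mpow S Q (Suc k) x y = (\<Sum>z\<in>S. Q x z * mpow S Q k z y)"
  using \<open>y \<in> S\<close>
proof (induction k arbitrary: y)
  case 0
  have "(\<Sum>z\<in>S. (if x = z then 1 else 0) * Q z y) = Q x y"
    using assms(1,2) by (simp add: if_distrib[of "\<lambda>t. t * _"] cong: if_cong)
  moreover have "(\<Sum>z\<in>S. Q x z * (if z = y then 1 else 0)) = Q x y"
    using assms(1) 0 by (simp add: if_distrib[of "\<lambda>t. _ * t"] cong: if_cong)
  ultimately show ?case by simp
next
  case (Suc k)
  have "mpow S Q (Suc (Suc k)) x y = (\<Sum>z\<in>S. mpow S Q (Suc k) x z * Q z y)"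
    by (rule mpow.simps(2))
  also have "\<dots> = (\<Sum>z\<in>S. (\<Sum>w\<in>S. Q x w * mpow S Q k w z) * Q z y)"
    by (rule sum.cong[OF refl], subst Suc.IH) auto
  also have "\<dots> = (\<Sum>w\<in>S. Q x w * (\<Sum>z\<in>S. mpow S Q k w z * Q z y))"
    unfolding sum_distrib_right sum_distrib_left mult.assoc by (rule sum.swap)
  finally show ?case by (simp only: mpow.simps)
qed

lemma mpow_apply_Suc:
  "(\<Sum>y\<in>S. mpow S K (Suc j) x y * h y) = (\<Sum>z\<in>S. mpow S K j x z * (\<Sum>y\<in>S. K z y * h y))"
  unfolding mpow.simps sum_distrib_right sum_distrib_left mult.assoc by (rule sum.swap)

(* Q = c K - c I with commuting summands, so Q^m is the binomial expansion of (c K - c I)^m. *)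
definition unif_coeff :: "real \<Rightarrow> nat \<Rightarrow> nat \<Rightarrow> real" where
  "unif_coeff c m j = real (m choose j) * c ^ j * (- c) ^ (m - j)"

lemma unif_coeff_Suc_sum:
  fixes a :: "nat \<Rightarrow> real"
  shows "(\<Sum>j\<le>m. unif_coeff c m j * (c * a (Suc j) - c * a j)) = (\<Sum>j\<le>Suc m. unif_coeff c (Suc m) j * a j)"
proof -
  have coeff_Suc_Suc: "unif_coeff c (Suc m) (Suc j) = c * unif_coeff c m j + (- c) * unif_coeff c m (Suc j)"
    if "j \<le> m" for j
  proof (cases "j = m")
    case False
    then have "m - j = Suc (m - Suc j)" using that by simp
    then show ?thesis by (simp add: unif_coeff_def algebra_simps)
  qed (simp add: unif_coeff_def)
  have "(\<Sum>j\<le>Suc m. unif_coeff c (Suc m) j * a j)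
      = unif_coeff c (Suc m) 0 * a 0 + (\<Sum>j\<le>m. unif_coeff c (Suc m) (Suc j) * a (Suc j))"
    by (rule sum.atMost_Suc_shift)
  also have "\<dots> = (\<Sum>j\<le>m. c * unif_coeff c m j * a (Suc j))
      + ((- c) * unif_coeff c m 0 * a 0 + (\<Sum>j\<le>m. (- c) * unif_coeff c m (Suc j) * a (Suc j)))"
    by (simp add: coeff_Suc_Suc algebra_simps sum.distrib sum_subtractf sum_negf) (simp add: unif_coeff_def)
  also have "(- c) * unif_coeff c m 0 * a 0 + (\<Sum>j\<le>m. (- c) * unif_coeff c m (Suc j) * a (Suc j))
      = (\<Sum>j\<le>Suc m. (- c) * unif_coeff c m j * a j)"
    by (rule sum.atMost_Suc_shift[symmetric])
  also have "\<dots> = (\<Sum>j\<le>m. (- c) * unif_coeff c m j * a j)"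
    by (simp add: unif_coeff_def)
  finally show ?thesis
    by (simp add: sum.distrib[symmetric] algebra_simps)
qed

lemma mpow_eq_sum_unif_coeff:
  assumes "finite S" and "c \<noteq> 0" and "x \<in> S" and "y \<in> S"
    and K: "\<And>x y. K x y = (if x = y then 1 else 0) + Q x y / c"
  shows "mpow S Q m x y = (\<Sum>j\<le>m. unif_coeff c m j * mpow S K j x y)"
  using \<open>y \<in> S\<close>
proof (induction m arbitrary: y)
  case 0
  then show ?case by (simp add: unif_coeff_def)
next
  case (Suc m)
  have Q: "Q z y = c * K z y - c * (if z = y then 1 else 0)" for z y
    using \<open>c \<noteq> 0\<close> by (simp add: K algebra_simps)
  have "mpow S Q (Suc m) x y
      = (\<Sum>z\<in>S. (\<Sum>j\<le>m. unif_coeff c m j * mpow S K j x z) * (c * K z y - c * (if z = y then 1 else 0)))"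
    unfolding mpow.simps(2) by (rule sum.cong[OF refl]) (metis Suc.IH Q)
  also have "\<dots> = (\<Sum>j\<le>m. unif_coeff c m j *
      (c * (\<Sum>z\<in>S. mpow S K j x z * K z y) - c * (\<Sum>z\<in>S. mpow S K j x z * (if z = y then 1 else 0))))"
    unfolding sum_distrib_right
    by (subst sum.swap, rule sum.cong[OF refl])
      (simp add: sum_distrib_left right_diff_distrib sum_subtractf mult.assoc mult.left_commute)
  also have "\<dots> = (\<Sum>j\<le>m. unif_coeff c m j * (c * mpow S K (Suc j) x y - c * mpow S K j x y))"
    using \<open>finite S\<close> Suc.prems by (simp add: if_distrib[of "\<lambda>t. _ * t"] cong: if_cong)
  also have "\<dots> = (\<Sum>j\<le>Suc m. unif_coeff c (Suc m) j * mpow S K j x y)"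
    by (rule unif_coeff_Suc_sum)
  finally show ?case .
qed

lemma
  assumes "finite S" and K_nonneg: "\<And>x y. x \<in> S \<Longrightarrow> y \<in> S \<Longrightarrow> 0 \<le> K x y"
    and K_row_sum: "\<And>x. x \<in> S \<Longrightarrow> (\<Sum>y\<in>S. K x y) = 1"
  shows mpow_stochastic_nonneg: "\<And>x y. x \<in> S \<Longrightarrow> y \<in> S \<Longrightarrow> 0 \<le> mpow S K j x y"
    and mpow_stochastic_row_sum: "\<And>x. x \<in> S \<Longrightarrow> (\<Sum>y\<in>S. mpow S K j x y) = 1"
proof -
  show "0 \<le> mpow S K j x y" if "x \<in> S" "y \<in> S" for x y
    using that by (induction j arbitrary: y) (auto intro!: sum_nonneg mult_nonneg_nonneg K_nonneg)
  show "(\<Sum>y\<in>S. mpow S K j x y) = 1" if "x \<in> S" for x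
  proof (induction j)
    case 0
    then show ?case using \<open>finite S\<close> that by simp
  next
    case (Suc j)
    have "(\<Sum>y\<in>S. mpow S K (Suc j) x y) = (\<Sum>z\<in>S. mpow S K j x z * (\<Sum>y\<in>S. K z y))"
      using mpow_apply_Suc[of S K j x "\<lambda>_. 1"] by simp
    also have "\<dots> = (\<Sum>z\<in>S. mpow S K j x z)"
      by (rule sum.cong) (auto simp: K_row_sum)
    finally show ?case using Suc by simp
  qed
qed

section \<open>Poisson averages\<close>

lemma exp_series_sums: "(\<lambda>j. u ^ j / fact j) sums exp (u::real)"
  using exp_converges[of u] by (simp add: divide_inverse mult.commute)

definition poisson_avg :: "real \<Rightarrow> (nat \<Rightarrow> real) \<Rightarrow> real" where
  "poisson_avg u b = exp (- u) * (\<Sum>j. u ^ j / fact j * b j)"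

lemma summable_poisson_weighted:
  fixes b :: "nat \<Rightarrow> real"
  assumes "\<And>j. \<bar>b j\<bar> \<le> M"
  shows "summable (\<lambda>j. u ^ j / fact j * b j)"
proof (rule summable_comparison_test[of _ "\<lambda>j. \<bar>u\<bar> ^ j / fact j * M"])
  show "summable (\<lambda>j. \<bar>u\<bar> ^ j / fact j * M)"
    using exp_series_sums[of "\<bar>u\<bar>"] by (intro summable_mult2) (simp add: sums_iff)
  show "\<exists>N. \<forall>j\<ge>N. norm (u ^ j / fact j * b j) \<le> \<bar>u\<bar> ^ j / fact j * M"
    using assms by (auto simp: abs_mult power_abs intro!: exI[of _ 0] divide_right_mono mult_left_mono)
qed

lemma poisson_avg_const: "poisson_avg u (\<lambda>_. a) = a"
  unfolding poisson_avg_def sums_unique[OF sums_mult2[OF exp_series_sums], symmetric]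
  by (simp add: exp_minus field_simps)

lemma poisson_avg_mono:
  assumes "u \<ge> 0" and "\<And>j. b j \<le> b' j" and "\<And>j. \<bar>b j\<bar> \<le> M" and "\<And>j. \<bar>b' j\<bar> \<le> M"
  shows "poisson_avg u b \<le> poisson_avg u b'"
  unfolding poisson_avg_def
  using assms by (intro mult_left_mono suminf_le summable_poisson_weighted) auto

lemma poisson_avg_step:
  "poisson_avg u (\<lambda>j. if j < N then a else b) = b - (b - a) * (exp (- u) * (\<Sum>j<N. u ^ j / fact j))"
proof -
  have head: "(\<lambda>j. if j < N then u ^ j / fact j * (b - a) else 0) sums (\<Sum>j<N. u ^ j / fact j * (b - a))"
    using sums_If_finite_set[of "{..<N}" "\<lambda>j. u ^ j / fact j * (b - a)"] by simp
  have "(\<lambda>j. u ^ j / fact j * (if j < N then a else b))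
      = (\<lambda>j. u ^ j / fact j * b - (if j < N then u ^ j / fact j * (b - a) else 0))"
    by (rule ext) (simp add: field_simps)
  then have "(\<lambda>j. u ^ j / fact j * (if j < N then a else b)) sums (exp u * b - (\<Sum>j<N. u ^ j / fact j) * (b - a))"
    using sums_diff[OF sums_mult2[OF exp_series_sums] head] by (simp add: sum_distrib_right)
  then show ?thesis
    unfolding poisson_avg_def by (simp add: sums_iff exp_minus field_simps)
qed

lemma poisson_head_tendsto_0: "((\<lambda>u::real. exp (- u) * (\<Sum>j<N. u ^ j / fact j)) \<longlongrightarrow> 0) at_top"
proof -
  have "((\<lambda>u::real. \<Sum>j<N. u ^ j / exp u / fact j) \<longlongrightarrow> 0) at_top"
    by (intro tendsto_null_sum) (rule tendsto_divide_zero, rule tendsto_power_div_exp_0)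
  then show ?thesis
    by (simp add: sum_distrib_left exp_minus field_simps)
qed

lemma poisson_avg_tendsto:
  assumes "incseq b" and "b \<longlonglongrightarrow> L"
  shows "((\<lambda>u. poisson_avg u b) \<longlongrightarrow> L) at_top"
proof -
  have b_ge: "b i \<le> b j" if "i \<le> j" for i j
    using \<open>incseq b\<close> that by (simp add: incseq_def)
  have b_le: "b j \<le> L" for j
    using incseq_le[OF assms] .
  define M where "M = \<bar>b 0\<bar> + \<bar>L\<bar>"
  have bound: "\<bar>b j\<bar> \<le> M" "\<bar>L\<bar> \<le> M" for j
    using b_ge[of 0 j] b_le[of j] by (auto simp: M_def)
  show ?thesis
  proof (rule order_tendstoI)
    fix a
    assume "L < a"
    have upper: "poisson_avg u b \<le> L" if "u \<ge> 0" for u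
      using poisson_avg_mono[OF that b_le bound] by (simp add: poisson_avg_const)
    show "\<forall>\<^sub>F u in at_top. poisson_avg u b < a"
      using eventually_ge_at_top[of 0] by (rule eventually_mono) (use upper \<open>L < a\<close> in fastforce)
  next
    fix a
    assume "a < L"
    then obtain N where "a < b N"
      using order_tendstoD(1)[OF \<open>b \<longlonglongrightarrow> L\<close>] by (auto simp: eventually_sequentially)
    have lower: "poisson_avg u (\<lambda>j. if j < N then b 0 else b N) \<le> poisson_avg u b" if "u \<ge> 0" for u
      using b_ge[of 0] b_ge[of N] bound
      by (intro poisson_avg_mono[OF that, of _ _ M]) (auto simp: not_less)
    have "((\<lambda>u. (b N - b 0) * (exp (- u) * (\<Sum>j<N. u ^ j / fact j))) \<longlongrightarrow> (b N - b 0) * 0) at_top"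
      by (intro tendsto_mult tendsto_const poisson_head_tendsto_0)
    then have "\<forall>\<^sub>F u in at_top. (b N - b 0) * (exp (- u) * (\<Sum>j<N. u ^ j / fact j)) < b N - a"
      using \<open>a < b N\<close> by (auto dest: order_tendstoD(2)[where a="b N - a"])
    then show "\<forall>\<^sub>F u in at_top. a < poisson_avg u b"
      using eventually_ge_at_top[of 0] by eventually_elim (use lower in \<open>fastforce simp: poisson_avg_step\<close>)
  qed
qed

section \<open>Uniformization of a finite continuous-time Markov chain\<close>

locale finite_generator =
  fixes S :: "'s set" and Q :: "'s \<Rightarrow> 's \<Rightarrow> real"
  assumes finite_S: "finite S"
    and gen_nonneg: "\<And>x y. x \<in> S \<Longrightarrow> y \<in> S \<Longrightarrow> x \<noteq> y \<Longrightarrow> 0 \<le> Q x y"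
    and gen_row_sum: "\<And>x. x \<in> S \<Longrightarrow> (\<Sum>y\<in>S. Q x y) = 0"
begin

definition unif_rate :: real where
  "unif_rate = 1 + (\<Sum>x\<in>S. \<Sum>y\<in>S - {x}. Q x y)"

definition unif_kernel :: "'s \<Rightarrow> 's \<Rightarrow> real" where
  "unif_kernel x y = (if x = y then 1 else 0) + Q x y / unif_rate"

lemma exit_rate_nonneg: "x \<in> S \<Longrightarrow> 0 \<le> (\<Sum>y\<in>S - {x}. Q x y)"
  by (intro sum_nonneg) (auto intro: gen_nonneg)

lemma exit_rate_less_unif_rate:
  assumes "x \<in> S"
  shows "(\<Sum>y\<in>S - {x}. Q x y) < unif_rate"
proof -
  have "(\<Sum>y\<in>S - {x}. Q x y) \<le> (\<Sum>x\<in>S. \<Sum>y\<in>S - {x}. Q x y)"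
    using assms finite_S exit_rate_nonneg by (intro member_le_sum) auto
  then show ?thesis by (simp add: unif_rate_def)
qed

lemma unif_rate_pos: "unif_rate > 0"
  unfolding unif_rate_def using exit_rate_nonneg by (smt (verit) sum_nonneg)

lemma gen_diag: "x \<in> S \<Longrightarrow> Q x x = - (\<Sum>y\<in>S - {x}. Q x y)"
  using gen_row_sum sum.remove[OF finite_S] by (metis add_eq_0_iff2)

lemma unif_kernel_nonneg: "x \<in> S \<Longrightarrow> y \<in> S \<Longrightarrow> 0 \<le> unif_kernel x y"
  using exit_rate_less_unif_rate[of x] unif_rate_pos gen_nonneg[of x y]
  by (cases "x = y") (auto simp: unif_kernel_def gen_diag field_simps)

lemma unif_kernel_apply:
  "x \<in> S \<Longrightarrow> (\<Sum>y\<in>S. unif_kernel x y * h y) = h x + (\<Sum>y\<in>S. Q x y * h y) / unif_rate"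
  using finite_S
  by (simp add: unif_kernel_def distrib_right sum.distrib sum_divide_distrib
      if_distrib[of "\<lambda>t. t * _"] cong: if_cong)

lemma unif_kernel_row_sum: "x \<in> S \<Longrightarrow> (\<Sum>y\<in>S. unif_kernel x y) = 1"
  using unif_kernel_apply[of x "\<lambda>_. 1"] gen_row_sum by simp

lemma unif_kernel_pow_nonneg: "x \<in> S \<Longrightarrow> y \<in> S \<Longrightarrow> 0 \<le> mpow S unif_kernel j x y"
  using mpow_stochastic_nonneg[OF finite_S unif_kernel_nonneg unif_kernel_row_sum] .

lemma unif_kernel_pow_le_1:
  assumes "x \<in> S" and "y \<in> S"
  shows "mpow S unif_kernel j x y \<le> 1"
proof -
  have "mpow S unif_kernel j x y \<le> (\<Sum>y\<in>S. mpow S unif_kernel j x y)"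
    using assms finite_S unif_kernel_pow_nonneg by (intro member_le_sum) auto
  then show ?thesis
    using mpow_stochastic_row_sum[OF finite_S unif_kernel_nonneg unif_kernel_row_sum assms(1)] by simp
qed

(* The Cauchy product of the series for exp (u K) and exp (- u) with u = c t, where Q = c (K - I). *)
theorem trans_prob_uniformization:
  assumes "x \<in> S" and "y \<in> S"
  shows "trans_prob S Q t x y = poisson_avg (unif_rate * t) (\<lambda>j. mpow S unif_kernel j x y)"
proof -
  define c where "c = unif_rate"
  define a where "a j = (c * t) ^ j / fact j * mpow S unif_kernel j x y" for j
  define b where "b j = (- (c * t)) ^ j / fact j" for j :: nat
  have pow_bound: "\<bar>mpow S unif_kernel j x y\<bar> \<le> 1" for j
    using unif_kernel_pow_nonneg unif_kernel_pow_le_1 assms by (simp add: abs_le_iff)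
  have "summable (\<lambda>j. \<bar>c * t\<bar> ^ j / fact j * \<bar>mpow S unif_kernel j x y\<bar>)"
    using pow_bound by (intro summable_poisson_weighted[of _ 1]) simp
  then have a_summable: "summable (\<lambda>j. norm (a j))"
    by (simp add: a_def abs_mult power_abs)
  have b_summable: "summable (\<lambda>j. norm (b j))"
    using exp_series_sums[of "\<bar>c * t\<bar>"] by (simp add: b_def abs_mult power_abs sums_iff)
  have b_sum: "(\<Sum>j. b j) = exp (- (c * t))"
    using exp_series_sums[of "- (c * t)"] by (simp add: b_def sums_iff)
  have product_term: "(\<Sum>i\<le>k. a i * b (k - i)) = t ^ k / fact k * mpow S Q k x y" for k
  proof -
    have "t ^ k / fact k * mpow S Q k x y = (\<Sum>i\<le>k. t ^ k / fact k * unif_coeff c k i * mpow S unif_kernel i x y)"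
      using mpow_eq_sum_unif_coeff[OF finite_S _ assms, of c unif_kernel Q k] unif_rate_pos
      by (simp add: c_def unif_kernel_def sum_distrib_left mult.assoc)
    also have "\<dots> = (\<Sum>i\<le>k. a i * b (k - i))"
    proof (rule sum.cong[OF refl])
      fix i
      assume "i \<in> {..k}"
      then have "i \<le> k" by simp
      then have t_pow: "t ^ k = t ^ i * t ^ (k - i)" and choose: "real (k choose i) = fact k / (fact i * fact (k - i))"
        by (simp_all add: power_add[symmetric] binomial_fact)
      show "t ^ k / fact k * unif_coeff c k i * mpow S unif_kernel i x y = a i * b (k - i)"
        unfolding a_def b_def unif_coeff_def t_pow choose power_mult_distrib minus_mult_left
        by (simp add: field_simps)
    qed
    finally show ?thesis by simp
  qed
  have "(\<lambda>k. t ^ k / fact k * mpow S Q k x y) sums ((\<Sum>j. a j) * exp (- (c * t)))"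
    using Cauchy_product_sums[OF a_summable b_summable] by (simp only: product_term b_sum)
  then show ?thesis
    unfolding trans_prob_def poisson_avg_def a_def c_def by (simp add: sums_iff mult.commute)
qed

lemma expectation_uniformization:
  assumes "x \<in> S"
  shows "(\<Sum>y\<in>S. trans_prob S Q t x y * h y)
    = poisson_avg (unif_rate * t) (\<lambda>j. \<Sum>y\<in>S. mpow S unif_kernel j x y * h y)"
proof -
  let ?w = "\<lambda>y j. (unif_rate * t) ^ j / fact j * mpow S unif_kernel j x y * h y"
  have summable: "summable (\<lambda>j. (unif_rate * t) ^ j / fact j * mpow S unif_kernel j x y)" if "y \<in> S" for y
    using unif_kernel_pow_nonneg[OF assms that] unif_kernel_pow_le_1[OF assms that]
    by (intro summable_poisson_weighted[of _ 1]) simp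
  have "(\<Sum>y\<in>S. trans_prob S Q t x y * h y) = (\<Sum>y\<in>S. exp (- (unif_rate * t)) * (\<Sum>j. ?w y j))"
  proof (rule sum.cong[OF refl])
    fix y
    assume "y \<in> S"
    then show "trans_prob S Q t x y * h y = exp (- (unif_rate * t)) * (\<Sum>j. ?w y j)"
      using suminf_mult2[OF summable[OF \<open>y \<in> S\<close>], of "h y"] trans_prob_uniformization[OF assms \<open>y \<in> S\<close>]
      by (simp add: poisson_avg_def)
  qed
  also have "\<dots> = exp (- (unif_rate * t)) * (\<Sum>y\<in>S. \<Sum>j. ?w y j)"
    by (simp only: sum_distrib_left)
  also have "(\<Sum>y\<in>S. \<Sum>j. ?w y j) = (\<Sum>j. \<Sum>y\<in>S. ?w y j)"
    by (intro suminf_sum[symmetric] summable_mult2 summable)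
  finally show ?thesis
    by (simp add: poisson_avg_def sum_distrib_left mult.assoc)
qed

lemma unif_kernel_pow_expectation_mono:
  assumes "\<And>z. z \<in> S \<Longrightarrow> 0 \<le> (\<Sum>y\<in>S. Q z y * h y)" and "x \<in> S"
  shows "(\<Sum>y\<in>S. mpow S unif_kernel j x y * h y) \<le> (\<Sum>y\<in>S. mpow S unif_kernel (Suc j) x y * h y)"
  unfolding mpow_apply_Suc
proof (rule sum_mono)
  fix z
  assume "z \<in> S"
  then have "h z \<le> (\<Sum>y\<in>S. unif_kernel z y * h y)"
    using assms(1) unif_rate_pos by (simp add: unif_kernel_apply)
  then show "mpow S unif_kernel j x z * h z \<le> mpow S unif_kernel j x z * (\<Sum>y\<in>S. unif_kernel z y * h y)"
    using unif_kernel_pow_nonneg[OF assms(2) \<open>z \<in> S\<close>] by (rule mult_left_mono)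
qed

lemma unif_kernel_pow_expectation_le:
  assumes "D \<subseteq> S"
    and closed: "\<And>x y. x \<in> D \<Longrightarrow> y \<in> S - D \<Longrightarrow> Q x y = 0"
    and drift: "\<And>x. x \<in> D \<Longrightarrow> (\<Sum>y\<in>S. Q x y * g y) \<le> 0"
    and "x \<in> D"
  shows "(\<Sum>y\<in>S. mpow S unif_kernel j x y * g y) \<le> g x"
  using \<open>x \<in> D\<close>
proof (induction j arbitrary: x)
  case 0
  then have "x \<in> S" using \<open>D \<subseteq> S\<close> by blast
  then show ?case using finite_S by (simp add: if_distrib[of "\<lambda>t. t * _"] cong: if_cong)
next
  case (Suc j)
  then have "x \<in> S" using \<open>D \<subseteq> S\<close> by blast
  have "(\<Sum>y\<in>S. mpow S unif_kernel (Suc j) x y * g y)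
      = (\<Sum>z\<in>S. unif_kernel x z * (\<Sum>y\<in>S. mpow S unif_kernel j z y * g y))"
  proof -
    have "(\<Sum>y\<in>S. mpow S unif_kernel (Suc j) x y * g y)
        = (\<Sum>y\<in>S. (\<Sum>z\<in>S. unif_kernel x z * mpow S unif_kernel j z y) * g y)"
      by (intro sum.cong refl, subst mpow_Suc_left[OF finite_S \<open>x \<in> S\<close>]) auto
    also have "\<dots> = (\<Sum>y\<in>S. \<Sum>z\<in>S. unif_kernel x z * (mpow S unif_kernel j z y * g y))"
      by (simp only: sum_distrib_right mult.assoc)
    also have "\<dots> = (\<Sum>z\<in>S. \<Sum>y\<in>S. unif_kernel x z * (mpow S unif_kernel j z y * g y))"
      by (rule sum.swap)
    finally show ?thesis
      by (simp only: sum_distrib_left)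
  qed
  also have "\<dots> \<le> (\<Sum>z\<in>S. unif_kernel x z * g z)"
  proof (rule sum_mono)
    fix z
    assume "z \<in> S"
    show "unif_kernel x z * (\<Sum>y\<in>S. mpow S unif_kernel j z y * g y) \<le> unif_kernel x z * g z"
    proof (cases "z \<in> D")
      case True
      show ?thesis
        using Suc.IH[OF True] unif_kernel_nonneg[OF \<open>x \<in> S\<close> \<open>z \<in> S\<close>] by (rule mult_left_mono)
    next
      case False
      then have "x \<noteq> z" and "Q x z = 0" using Suc.prems \<open>z \<in> S\<close> closed by auto
      then show ?thesis by (simp add: unif_kernel_def)
    qed
  qed
  also have "\<dots> \<le> g x"
    using drift[OF Suc.prems] unif_rate_pos \<open>x \<in> S\<close>
    by (simp add: unif_kernel_apply divide_nonpos_pos)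
  finally show ?case .
qed

theorem expectation_limit_le:
  assumes "D \<subseteq> S"
    and closed: "\<And>x y. x \<in> D \<Longrightarrow> y \<in> S - D \<Longrightarrow> Q x y = 0"
    and g_drift: "\<And>x. x \<in> D \<Longrightarrow> (\<Sum>y\<in>S. Q x y * g y) \<le> 0"
    and h_drift: "\<And>x. x \<in> S \<Longrightarrow> 0 \<le> (\<Sum>y\<in>S. Q x y * h y)"
    and h_le_g: "\<And>y. y \<in> S \<Longrightarrow> h y \<le> g y"
    and "x \<in> D"
  shows "Lim at_top (\<lambda>t. \<Sum>y\<in>S. trans_prob S Q t x y * h y) \<le> g x"
proof -
  define b where "b j = (\<Sum>y\<in>S. mpow S unif_kernel j x y * h y)" for j
  have "x \<in> S" using assms by blast
  have "incseq b"
    unfolding b_def by (intro incseq_SucI unif_kernel_pow_expectation_mono[OF h_drift \<open>x \<in> S\<close>])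
  have b_le: "b j \<le> g x" for j
  proof -
    have "b j \<le> (\<Sum>y\<in>S. mpow S unif_kernel j x y * g y)"
      unfolding b_def using unif_kernel_pow_nonneg[OF \<open>x \<in> S\<close>] h_le_g
      by (intro sum_mono mult_left_mono) auto
    also have "\<dots> \<le> g x"
      by (rule unif_kernel_pow_expectation_le[OF \<open>D \<subseteq> S\<close> closed g_drift \<open>x \<in> D\<close>])
    finally show ?thesis .
  qed
  obtain L where "b \<longlonglongrightarrow> L"
    using incseq_convergent[OF \<open>incseq b\<close>] b_le by blast
  have "filterlim (\<lambda>t. unif_rate * t) at_top at_top"
    by (rule filterlim_tendsto_pos_mult_at_top[OF tendsto_const unif_rate_pos filterlim_ident])
  from filterlim_compose[OF poisson_avg_tendsto[OF \<open>incseq b\<close> \<open>b \<longlonglongrightarrow> L\<close>] this]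
  have "((\<lambda>t. \<Sum>y\<in>S. trans_prob S Q t x y * h y) \<longlongrightarrow> L) at_top"
    by (simp add: expectation_uniformization[OF \<open>x \<in> S\<close>] b_def[abs_def])
  moreover have "L \<le> g x"
    using LIMSEQ_le_const2[OF \<open>b \<longlonglongrightarrow> L\<close>] b_le by blast
  ultimately show ?thesis
    by (simp add: tendsto_Lim)
qed

end

section \<open>The SIR model with isolation\<close>

lemma sum_lessThan_mult:
  fixes f :: "nat \<Rightarrow> 'a::comm_monoid_add"
  shows "sum f {..<n * p} = (\<Sum>i<n. \<Sum>l<p. f (i * p + l))"
proof -
  have "(\<Sum>l<p. f (i * p + l)) = sum f {i * p..<i * p + p}" for i
    using sum.shift_bounds_nat_ivl[of f 0 "i * p" p] by (simp add: atLeast0LessThan add.commute)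
  then show ?thesis
    by (simp add: sum.nat_group)
qed

lemma index_less_mult: "i < n \<Longrightarrow> k < (p::nat) \<Longrightarrow> i * p + k < n * p"
  by (metis add.commute add_lessD1 less_imp_le_nat mult_Suc nat_add_left_cancel_less
      mult_le_mono1 order_less_le_trans Suc_leI)

definition local_states :: "nat \<Rightarrow> lstate set" where
  "local_states p = insert Sus (insert Rem (Inf ` {..<p}))"

lemma states_eq:
  "states n p = {x. \<forall>i. (i \<in> {..<n} \<longrightarrow> x i \<in> local_states p) \<and> (i \<notin> {..<n} \<longrightarrow> x i = Sus)}"
  by (auto simp: states_def local_states_def not_less)

lemma finite_local_states: "finite (local_states p)"
  by (simp add: local_states_def)

lemma finite_states: "finite (states n p)"
  unfolding states_eq by (rule finite_set_of_finite_funs) (auto simp: finite_local_states)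

lemma states_local_state: "x \<in> states n p \<Longrightarrow> i < n \<Longrightarrow> x i \<in> local_states p"
  by (simp add: states_eq)

lemma states_update:
  "x \<in> states n p \<Longrightarrow> i < n \<Longrightarrow> s \<in> local_states p \<Longrightarrow> x(i := s) \<in> states n p"
  by (simp add: states_eq)

lemma sum_local_states: "(\<Sum>s\<in>local_states p. f s) = f Sus + f Rem + (\<Sum>l<p. f (Inf l))"
  by (simp add: local_states_def image_iff sum.reindex inj_on_def add.assoc)

lemma single_site_updates:
  assumes "x \<in> states n p" and "i < n"
  shows "{y \<in> states n p - {x}. x i \<noteq> y i \<and> y = x(i := y i)}
    = (\<lambda>s. x(i := s)) ` (local_states p - {x i})"
proof (intro equalityI subsetI)
  fix y
  assume "y \<in> {y \<in> states n p - {x}. x i \<noteq> y i \<and> y = x(i := y i)}"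
  then show "y \<in> (\<lambda>s. x(i := s)) ` (local_states p - {x i})"
    using states_local_state[OF _ \<open>i < n\<close>] by (intro image_eqI[of _ _ "y i"]) auto
next
  fix y
  assume "y \<in> (\<lambda>s. x(i := s)) ` (local_states p - {x i})"
  then obtain s where "s \<in> local_states p" "s \<noteq> x i" "y = x(i := s)" by auto
  then show "y \<in> {y \<in> states n p - {x}. x i \<noteq> y i \<and> y = x(i := y i)}"
    using states_update[OF assms] by (auto simp: fun_upd_idem_iff)
qed

lemma sum_single_site_updates:
  assumes "x \<in> states n p" and "i < n"
  shows "(\<Sum>y\<in>states n p - {x}. if x i \<noteq> y i \<and> y = x(i := y i) then F y else 0)
    = (\<Sum>s\<in>local_states p - {x i}. F (x(i := s)))"
proof -
  have "(\<Sum>y\<in>states n p - {x}. if x i \<noteq> y i \<and> y = x(i := y i) then F y else 0)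
      = sum F ((\<lambda>s. x(i := s)) ` (local_states p - {x i}))"
    unfolding single_site_updates[OF assms, symmetric] by (rule sum.inter_filter[symmetric]) (simp add: finite_states)
  also have "\<dots> = (\<Sum>s\<in>local_states p - {x i}. F (x(i := s)))"
    by (subst sum.reindex) (auto simp: inj_on_def dest: fun_cong[where x=i])
  finally show ?thesis .
qed

lemma gen_apply:
  assumes x: "x \<in> states n p"
  shows "(\<Sum>y\<in>states n p. gen n p A beta delta Pi x y * h y)
    = (\<Sum>i<n. \<Sum>s\<in>local_states p. lrate n p A beta delta Pi i x (x i) s * (h (x(i := s)) - h x))"
proof -
  let ?S = "states n p"
  let ?r = "rate n p A beta delta Pi"
  let ?lr = "lrate n p A beta delta Pi"
  have "(\<Sum>y\<in>?S. gen n p A beta delta Pi x y * h y)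
      = gen n p A beta delta Pi x x * h x + (\<Sum>y\<in>?S - {x}. gen n p A beta delta Pi x y * h y)"
    by (rule sum.remove[OF finite_states x])
  also have "\<dots> = - (\<Sum>y\<in>?S - {x}. ?r x y) * h x + (\<Sum>y\<in>?S - {x}. ?r x y * h y)"
    by (intro arg_cong2[where f="(+)"] sum.cong) (auto simp: gen_def)
  also have "\<dots> = (\<Sum>y\<in>?S - {x}. ?r x y * (h y - h x))"
    by (simp add: sum_distrib_right right_diff_distrib sum_subtractf)
  also have "\<dots> = (\<Sum>i<n. \<Sum>y\<in>?S - {x}.
      if x i \<noteq> y i \<and> y = x(i := y i) then ?lr i x (x i) (y i) * (h y - h x) else 0)"
    unfolding rate_def sum_distrib_right by (subst sum.swap) (auto intro!: sum.cong)
  also have "\<dots> = (\<Sum>i<n. \<Sum>s\<in>local_states p - {x i}. ?lr i x (x i) s * (h (x(i := s)) - h x))"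
    by (rule sum.cong[OF refl], subst sum_single_site_updates[OF x]) auto
  also have "\<dots> = (\<Sum>i<n. \<Sum>s\<in>local_states p. ?lr i x (x i) s * (h (x(i := s)) - h x))"
    by (rule sum.cong[OF refl]) (simp add: sum_diff1 finite_local_states)
  finally show ?thesis .
qed

lemma gen_apply_separable:
  assumes "x \<in> states n p"
  shows "(\<Sum>y\<in>states n p. gen n p A beta delta Pi x y * (\<Sum>i<n. f i (y i)))
    = (\<Sum>i<n. \<Sum>s\<in>local_states p. lrate n p A beta delta Pi i x (x i) s * (f i s - f i (x i)))"
proof -
  have "(\<Sum>j<n. f j ((x(i := s)) j)) - (\<Sum>j<n. f j (x j)) = f i s - f i (x i)" if "i < n" for i s
    using that by (simp add: sum_subtractf[symmetric] if_distrib[of "\<lambda>t. f _ t - _"] cong: if_cong)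
  then show ?thesis
    by (simp add: gen_apply[OF assms])
qed

lemma mmul_diagm_diagm: "i < n \<Longrightarrow> mmul n (mmul n (diagm a) (diagm b)) C i j = a i * b i * C i j"
  by (simp add: mmul_def diagm_def if_distrib[of "\<lambda>t. t * _"] if_distrib[of "\<lambda>t. _ * t"] cong: if_cong)

lemma vmul_bdiag_kron_entry:
  assumes "j < n" and "k < p"
  shows "vmul (n * p) v (madd (bdiag p p (\<lambda>i. transp (P i))) (kron p p C (\<lambda>k l. u1 k * ones l))) (j * p + k)
    = (\<Sum>l<p. v (j * p + l) * P j k l) + (\<Sum>i<n. v (i * p) * C i j)"
proof -
  have "vmul (n * p) v (madd (bdiag p p (\<lambda>i. transp (P i))) (kron p p C (\<lambda>k l. u1 k * ones l))) (j * p + k)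
      = (\<Sum>i<n. \<Sum>l<p. (if i = j then v (i * p + l) * P j k l else 0) + (if l = 0 then v (i * p) * C i j else 0))"
    unfolding vmul_def sum_lessThan_mult
    using \<open>k < p\<close> by (intro sum.cong refl) (auto simp: madd_def bdiag_def kron_def transp_def u1_def ones_def algebra_simps)
  also have "\<dots> = (\<Sum>l<p. v (j * p + l) * P j k l) + (\<Sum>i<n. v (i * p) * C i j)"
    using assms by (simp add: sum.distrib, subst sum.swap, simp)
  finally show ?thesis .
qed

lemma vmul_ones_bdiag_entry:
  assumes "j < n" and "k < p"
  shows "vmul n ones (bdiag 1 p (\<lambda>i. transp (\<lambda>k _. w i k))) (j * p + k) = w j k"
proof -
  have "vmul n ones (bdiag 1 p (\<lambda>i. transp (\<lambda>k _. w i k))) (j * p + k) = (\<Sum>i<n. if i = j then w j k else 0)"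
    unfolding vmul_def using \<open>k < p\<close> by (intro sum.cong refl) (simp add: bdiag_def transp_def ones_def)
  then show ?thesis using \<open>j < n\<close> by simp
qed

lemma sum_idm: "k < p \<Longrightarrow> (\<Sum>l<p. f l * idm k l) = f k"
  by (simp add: idm_def if_distrib[of "\<lambda>t. _ * t"] cong: if_cong)

locale sir_isolation =
  fixes n p :: nat and A :: "nat \<Rightarrow> nat \<Rightarrow> real" and beta delta :: "nat \<Rightarrow> real"
    and Pi :: "nat \<Rightarrow> nat \<Rightarrow> nat \<Rightarrow> real"
  assumes p_pos: "0 < p"
    and A_nonneg: "\<And>i j. i < n \<Longrightarrow> j < n \<Longrightarrow> 0 \<le> A i j"
    and beta_nonneg: "\<And>i. i < n \<Longrightarrow> 0 \<le> beta i"
    and Pi_metzler: "\<And>i. i < n \<Longrightarrow> metzler p (Pi i)"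
    and removal_rate_nonneg: "\<And>i k. i < n \<Longrightarrow> k < p \<Longrightarrow> (\<Sum>l<p. Pi i k l) \<le> delta i"
begin

lemma lrate_nonneg:
  assumes "x \<in> states n p" and "i < n"
  shows "0 \<le> lrate n p A beta delta Pi i x (x i) s"
proof (cases "x i")
  case (Inf k)
  then have "k < p"
    using states_local_state[OF assms] by (auto simp: local_states_def)
  then show ?thesis
    using Inf Pi_metzler[OF \<open>i < n\<close>] removal_rate_nonneg[OF \<open>i < n\<close>, of k]
    by (cases s) (auto simp: lrate_def metzler_def)
qed (use assms A_nonneg beta_nonneg in \<open>cases s; auto simp: lrate_def intro!: mult_nonneg_nonneg sum_nonneg\<close>)+

sublocale finite_generator "states n p" "gen n p A beta delta Pi"
proof
  show "finite (states n p)" by (rule finite_states)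
  show "0 \<le> gen n p A beta delta Pi x y" if "x \<in> states n p" "x \<noteq> y" for x y
    using that lrate_nonneg by (auto simp: gen_def rate_def intro!: sum_nonneg)
  show "(\<Sum>y\<in>states n p. gen n p A beta delta Pi x y) = 0" if "x \<in> states n p" for x
    using gen_apply[OF that, where h="\<lambda>_. 1"] by simp
qed

definition removed_count :: "(nat \<Rightarrow> lstate) \<Rightarrow> real" where
  "removed_count y = (\<Sum>i<n. if y i = Rem then 1 else 0)"

definition site_potential :: "(nat \<Rightarrow> real) \<Rightarrow> nat \<Rightarrow> lstate \<Rightarrow> real" where
  "site_potential v i s = (case s of Sus \<Rightarrow> 0 | Inf k \<Rightarrow> v (i * p + k) | Rem \<Rightarrow> 1)"

definition potential :: "(nat \<Rightarrow> real) \<Rightarrow> (nat \<Rightarrow> lstate) \<Rightarrow> real" where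
  "potential v y = (\<Sum>i<n. site_potential v i (y i))"

definition post_infection_states :: "(nat \<Rightarrow> bool) \<Rightarrow> (nat \<Rightarrow> lstate) set" where
  "post_infection_states inf0 = {x \<in> states n p. \<forall>i<n. inf0 i \<longrightarrow> x i \<noteq> Sus}"

definition infection_pressure :: "(nat \<Rightarrow> bool) \<Rightarrow> (nat \<Rightarrow> real) \<Rightarrow> nat \<Rightarrow> real" where
  "infection_pressure inf0 v j = (\<Sum>i<n. v (i * p) * (if inf0 i then 0 else 1) * beta i * A i j)"

definition phase_drift :: "(nat \<Rightarrow> real) \<Rightarrow> nat \<Rightarrow> nat \<Rightarrow> real" where
  "phase_drift v j k = (\<Sum>l<p. v (j * p + l) * Pi j k l) - delta j * v (j * p + k) + delta j - (\<Sum>l<p. Pi j k l)"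

lemma gen_removed_count_nonneg:
  assumes "x \<in> states n p"
  shows "0 \<le> (\<Sum>y\<in>states n p. gen n p A beta delta Pi x y * removed_count y)"
  unfolding removed_count_def gen_apply_separable[OF assms, where f="\<lambda>i s. if s = Rem then 1 else 0"]
  using lrate_nonneg[OF assms] by (intro sum_nonneg) (auto simp: lrate_def)

lemma removed_count_le_potential:
  assumes "y \<in> states n p" and "\<forall>k<n * p. 0 \<le> v k"
  shows "removed_count y \<le> potential v y"
  unfolding removed_count_def potential_def
proof (rule sum_mono)
  fix i
  assume "i \<in> {..<n}"
  then have "i < n" by simp
  show "(if y i = Rem then 1 else 0) \<le> site_potential v i (y i)"
  proof (cases "y i")
    case (Inf k)
    then have "k < p"
      using states_local_state[OF assms(1) \<open>i < n\<close>] by (auto simp: local_states_def)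
    then show ?thesis
      using Inf assms(2) index_less_mult[OF \<open>i < n\<close>] by (simp add: site_potential_def)
  qed (simp_all add: site_potential_def)
qed

lemma site_potential_drift:
  assumes "x \<in> states n p" and "i < n"
  shows "(\<Sum>s\<in>local_states p. lrate n p A beta delta Pi i x (x i) s * (site_potential v i s - site_potential v i (x i)))
    = (case x i of
         Sus \<Rightarrow> beta i * (\<Sum>j<n. A i j * (if is_inf (x j) then 1 else 0)) * v (i * p)
       | Inf k \<Rightarrow> phase_drift v i k
       | Rem \<Rightarrow> 0)"
proof (cases "x i")
  case Sus
  then show ?thesis
    using p_pos by (simp add: sum_local_states lrate_def site_potential_def if_distrib[of "\<lambda>t. t * _"] cong: if_cong)
next
  case (Inf k)
  then have "k < p"
    using states_local_state[OF assms] by (auto simp: local_states_def)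
  have "(\<Sum>l<p. lrate n p A beta delta Pi i x (x i) (Inf l) * (site_potential v i (Inf l) - site_potential v i (x i)))
      = (\<Sum>l<p. Pi i k l * (v (i * p + l) - v (i * p + k)))"
    using Inf by (intro sum.cong refl) (auto simp: lrate_def site_potential_def)
  also have "\<dots> = (\<Sum>l<p. v (i * p + l) * Pi i k l) - (\<Sum>l<p. Pi i k l) * v (i * p + k)"
    by (simp add: right_diff_distrib sum_subtractf sum_distrib_right mult.commute)
  finally have "(\<Sum>l<p. lrate n p A beta delta Pi i x (x i) (Inf l) * (site_potential v i (Inf l) - site_potential v i (x i)))
      = (\<Sum>l<p. v (i * p + l) * Pi i k l) - (\<Sum>l<p. Pi i k l) * v (i * p + k)" .
  then show ?thesis
    using Inf by (simp add: sum_local_states lrate_def site_potential_def phase_drift_def algebra_simps)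
qed (simp add: sum_local_states lrate_def)

(* Infection of node i requires x i = Sus, which on post_infection_states forces \<not> inf0 i:
   this is how the diagonal matrix J of initially susceptible nodes enters. *)
lemma gen_potential_nonpos:
  assumes v_nonneg: "\<forall>k<n * p. 0 \<le> v k"
    and drift: "\<And>j k. j < n \<Longrightarrow> k < p \<Longrightarrow> infection_pressure inf0 v j + phase_drift v j k \<le> 0"
    and x: "x \<in> post_infection_states inf0"
  shows "(\<Sum>y\<in>states n p. gen n p A beta delta Pi x y * potential v y) \<le> 0"
proof -
  have "x \<in> states n p" using x by (simp add: post_infection_states_def)
  define I where "I j = (if is_inf (x j) then 1 else (0::real))" for j
  define F where "F i = (case x i of Inf k \<Rightarrow> phase_drift v i k | _ \<Rightarrow> 0)" for i
  have "(\<Sum>y\<in>states n p. gen n p A beta delta Pi x y * potential v y)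
      = (\<Sum>i<n. (if x i = Sus then beta i * (\<Sum>j<n. A i j * I j) * v (i * p) else 0) + F i)"
    unfolding potential_def gen_apply_separable[OF \<open>x \<in> states n p\<close>]
    by (intro sum.cong refl) (auto simp: site_potential_drift[OF \<open>x \<in> states n p\<close>] I_def F_def split: lstate.split)
  also have "\<dots> \<le> (\<Sum>i<n. (\<Sum>j<n. v (i * p) * (if inf0 i then 0 else 1) * beta i * A i j * I j) + F i)"
  proof (intro sum_mono add_right_mono)
    fix i
    assume "i \<in> {..<n}"
    then have "i < n" by simp
    have "0 \<le> v (i * p)" using v_nonneg index_less_mult[OF \<open>i < n\<close> p_pos] by simp
    then show "(if x i = Sus then beta i * (\<Sum>j<n. A i j * I j) * v (i * p) else 0)
      \<le> (\<Sum>j<n. v (i * p) * (if inf0 i then 0 else 1) * beta i * A i j * I j)"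
      using x \<open>i < n\<close> beta_nonneg A_nonneg
      by (auto simp: post_infection_states_def I_def sum_distrib_left sum_distrib_right mult_ac
          intro!: sum_nonneg mult_nonneg_nonneg)
  qed
  also have "\<dots> = (\<Sum>j<n. I j * infection_pressure inf0 v j + F j)"
    unfolding infection_pressure_def sum.distrib sum_distrib_left
    by (subst (2) sum.swap) (simp add: mult_ac)
  also have "\<dots> \<le> 0"
  proof (intro sum_nonpos)
    fix j
    assume "j \<in> {..<n}"
    then have "j < n" by simp
    show "I j * infection_pressure inf0 v j + F j \<le> 0"
    proof (cases "x j")
      case (Inf k)
      then have "k < p"
        using states_local_state[OF \<open>x \<in> states n p\<close> \<open>j < n\<close>] by (auto simp: local_states_def)
      then show ?thesis using drift[OF \<open>j < n\<close>] Inf by (simp add: I_def F_def is_inf_def)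
    qed (simp_all add: I_def F_def is_inf_def)
  qed
  finally show ?thesis .
qed

lemma drift_of_lyapunov_matrix_ineq:
  assumes cond1:
      "let Pi' = (\<lambda>i k l. Pi i k l - delta i * idm k l);
           w' = (\<lambda>i k. - (\<Sum>l<p. Pi' i k l));
           J = diagm (\<lambda>i. if inf0 i then 0 else 1);
           B = diagm beta;
           M = madd (bdiag p p (\<lambda>i. transp (Pi' i)))
                    (kron p p (mmul n (mmul n J B) A) (\<lambda>k l. u1 k * ones l));
           W = bdiag 1 p (\<lambda>i. transp (\<lambda>k _. w' i k))
       in \<forall>j<n * p. vmul (n * p) v M j + vmul n ones W j < 0"
    and "j < n" and "k < p"
  shows "infection_pressure inf0 v j + phase_drift v j k < 0"
proof -
  have "(\<Sum>l<p. v (j * p + l) * (Pi j k l - delta j * idm k l))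
      + (\<Sum>i<n. v (i * p) * mmul n (mmul n (diagm (\<lambda>i. if inf0 i then 0 else 1)) (diagm beta)) A i j)
      - (\<Sum>l<p. Pi j k l - delta j * idm k l) < 0"
    using cond1[unfolded Let_def, rule_format, OF index_less_mult[OF \<open>j < n\<close> \<open>k < p\<close>]]
    unfolding vmul_bdiag_kron_entry[OF \<open>j < n\<close> \<open>k < p\<close>] vmul_ones_bdiag_entry[OF \<open>j < n\<close> \<open>k < p\<close>]
    by simp
  moreover have "(\<Sum>l<p. v (j * p + l) * (delta j * idm k l)) = delta j * v (j * p + k)"
    and "(\<Sum>l<p. idm k l) = 1"
    using sum_idm[OF \<open>k < p\<close>, of "\<lambda>l. delta j * v (j * p + l)"] sum_idm[OF \<open>k < p\<close>, of "\<lambda>_. 1"]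
    by (simp_all add: mult_ac)
  ultimately show ?thesis
    by (simp add: mmul_diagm_diagm infection_pressure_def phase_drift_def right_diff_distrib
        sum_subtractf sum_distrib_left[symmetric] mult.assoc)
qed

lemma post_infection_states_closed:
  assumes x: "x \<in> post_infection_states inf0" and y: "y \<in> states n p - post_infection_states inf0"
  shows "gen n p A beta delta Pi x y = 0"
proof -
  obtain i' where "i' < n" "inf0 i'" "y i' = Sus" "x i' \<noteq> Sus"
    using x y by (auto simp: post_infection_states_def)
  then have "x \<noteq> y" by auto
  have "(if x i \<noteq> y i \<and> y = x(i := y i) then lrate n p A beta delta Pi i x (x i) (y i) else 0) = 0" for i
  proof (cases "i = i'")
    case False
    then have "y \<noteq> x(i := y i)" using \<open>y i' = Sus\<close> \<open>x i' \<noteq> Sus\<close> by (metis fun_upd_other)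
    then show ?thesis by simp
  qed (cases "x i"; simp add: lrate_def \<open>y i' = Sus\<close>)
  then show ?thesis
    using \<open>x \<noteq> y\<close> by (simp add: gen_def rate_def)
qed

lemma init_state_post_infection: "init_state n inf0 \<in> post_infection_states inf0"
  using p_pos by (auto simp: post_infection_states_def states_def init_state_def)

lemma potential_init_state:
  "potential v (init_state n inf0) = (\<Sum>k<n * p. v k * (if inf0 (k div p) then u1 (k mod p) else 0))"
proof -
  have "(\<Sum>k<n * p. v k * (if inf0 (k div p) then u1 (k mod p) else 0))
      = (\<Sum>i<n. \<Sum>l<p. v (i * p + l) * (if inf0 i then u1 l else 0))"
    unfolding sum_lessThan_mult by (intro sum.cong refl) auto
  also have "\<dots> = (\<Sum>i<n. if inf0 i then v (i * p) else 0)"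
    using p_pos by (intro sum.cong refl) (simp add: u1_def if_distrib[of "\<lambda>t. _ * t"] cong: if_cong)
  also have "\<dots> = potential v (init_state n inf0)"
    unfolding potential_def by (intro sum.cong refl) (simp add: site_potential_def init_state_def)
  finally show ?thesis ..
qed

lemma exp_removed_eq:
  "exp_removed n p A beta delta Pi inf0 t
    = (\<Sum>y\<in>states n p. trans_prob (states n p) (gen n p A beta delta Pi) t (init_state n inf0) y * removed_count y)"
proof -
  have "real (card {i. i < n \<and> y i = Rem}) = removed_count y" for y
    by (simp add: removed_count_def sum.If_cases Collect_conj_eq lessThan_def Int_commute)
  then show ?thesis
    by (simp add: exp_removed_def)
qed

theorem exp_removed_limit_le_potential:
  assumes "\<forall>k<n * p. 0 \<le> v k"
    and "\<And>j k. j < n \<Longrightarrow> k < p \<Longrightarrow> infection_pressure inf0 v j + phase_drift v j k \<le> 0"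
  shows "Lim at_top (exp_removed n p A beta delta Pi inf0) \<le> potential v (init_state n inf0)"
  unfolding exp_removed_eq[abs_def]
proof (rule expectation_limit_le)
  show "post_infection_states inf0 \<subseteq> states n p"
    by (auto simp: post_infection_states_def)
qed (use assms gen_potential_nonpos[OF assms] post_infection_states_closed gen_removed_count_nonneg
      removed_count_le_potential init_state_post_infection in auto)

end

theorem proposition3:
  fixes n p :: nat
    and A :: "nat \<Rightarrow> nat \<Rightarrow> real"
    and beta delta :: "nat \<Rightarrow> real"
    and Pi :: "nat \<Rightarrow> nat \<Rightarrow> nat \<Rightarrow> real"
    and inf0 :: "nat \<Rightarrow> bool"
    and v :: "nat \<Rightarrow> real"
    and lbar :: real
  assumes n_pos: "n \<ge> 1" and p_pos: "p \<ge> 1"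
    and A_adj: "\<forall>i<n. \<forall>j<n. A i j \<in> {0, 1}"
    and A_sym: "\<forall>i<n. \<forall>j<n. A i j = A j i"
    and beta_pos: "\<forall>i<n. beta i > 0"
    and delta_pos: "\<forall>i<n. delta i > 0"
    and Pi_metzler: "\<forall>i<n. metzler p (Pi i)"
    and Pi_rows: "\<forall>i<n. \<forall>k<p. (\<Sum>l<p. Pi i k l) \<le> 0"
    and Pi_inv: "\<forall>i<n. invertible_sq p (Pi i)"
    and lbar_pos: "lbar > 0"
    and v_pos: "\<forall>k<n * p. v k > 0"
    and cond1:
      "let Pi' = (\<lambda>i k l. Pi i k l - delta i * idm k l);
           w' = (\<lambda>i k. - (\<Sum>l<p. Pi' i k l));
           J = diagm (\<lambda>i. if inf0 i then 0 else 1);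
           B = diagm beta;
           M = madd (bdiag p p (\<lambda>i. transp (Pi' i)))
                    (kron p p (mmul n (mmul n J B) A) (\<lambda>k l. u1 k * ones l));
           W = bdiag 1 p (\<lambda>i. transp (\<lambda>k _. w' i k))
       in \<forall>j<n * p. vmul (n * p) v M j + vmul n ones W j < 0"
    and cond2:
      "(\<Sum>k<n * p. v k * (if inf0 (k div p) then u1 (k mod p) else 0)) < lbar + sigmaI0 n inf0"
  shows "epidemic_lambda n p A beta delta Pi inf0 < lbar"
proof -
  interpret sir_isolation n p A beta delta Pi
  proof
    show "0 < p" using p_pos by simp
    show "0 \<le> A i j" if "i < n" "j < n" for i j
      using A_adj that by fastforce
    show "\<And>i k. i < n \<Longrightarrow> k < p \<Longrightarrow> (\<Sum>l<p. Pi i k l) \<le> delta i"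
      using Pi_rows delta_pos by (smt (verit))
  qed (use beta_pos Pi_metzler in auto)
  have "Lim at_top (exp_removed n p A beta delta Pi inf0) \<le> potential v (init_state n inf0)"
    using v_pos drift_of_lyapunov_matrix_ineq[OF cond1]
    by (intro exp_removed_limit_le_potential) (auto intro: less_imp_le)
  then show ?thesis
    using cond2 by (simp add: epidemic_lambda_def potential_init_state)
qed

end
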